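(* Skeptic can weakly force each of the events \[ E_5:=\{\xi:\ s_n>\sqrt n-1\ \text{for infinitely many } n\},\qquad E_6:=\{\xi:\ s_n<-\sqrt n+1\ \text{for infinitely many } n\}. \]
   Context: Fair-coin game: in rounds $n=1,2,\dots$ Skeptic announces $M_n\in\mathbb{R}$ (depending only on $x_1,\dots,x_{n-1}$), then Reality announces $x_n\in\{-1,1\}$. A path is an infinite sequence $\xi=x_1x_2\cdots\in\{-1,1\}^{\mathbb{N}}$, and $\Omega$ is the set of paths. We write $s_n:=x_1+\cdots+x_n$, with $s_0=0$. The capital process of a strategy with zero initial capital is $\mathcal{K}^{\mathcal{P}}_n=\sum_{k=1}^nM_kx_k$. Skeptic weakly forces $E\subseteq\Omega$ if some strategy $\mathcal{P}$ has $\mathcal{K}^{\mathcal{P}}_n(\xi)\ge-1$ for all $\xi\in\Omega$ and $n\ge0$, and $\limsup_n\mathcal{K}^{\mathcal{P}}_n(\xi)=\infty$ for every $\xi\notin E$. *)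

theory Defs
  imports "HOL-Analysis.Analysis" "HOL-Library.Liminf_Limsup"
begin

text \<open>Paths: a path is xi :: nat => real with all values in {-1,1}; the move x_(k+1)
  of Reality in round k+1 is xi k (0-based storage of x_1 x_2 ...).\<close>

definition Omega :: "(nat \<Rightarrow> real) set" where
  "Omega = {xi. \<forall>n. xi n \<in> {-1, 1}}"

definition ssum :: "(nat \<Rightarrow> real) \<Rightarrow> nat \<Rightarrow> real" where
  "ssum xi n = (\<Sum>k<n. xi k)"

text \<open>A strategy maps the history (x_1,...,x_(n-1)) to the stake M_n.
  Capital with zero initial capital: K_n = sum_(k=1..n) M_k x_k.\<close>
type_synonym strategy = "real list \<Rightarrow> real"

definition capital :: "strategy \<Rightarrow> (nat \<Rightarrow> real) \<Rightarrow> nat \<Rightarrow> real" where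
  "capital P xi n = (\<Sum>k<n. P (map xi [0..<k]) * xi k)"

definition weakly_forces :: "(nat \<Rightarrow> real) set \<Rightarrow> bool" where
  "weakly_forces E \<longleftrightarrow> (\<exists>P.
     (\<forall>xi\<in>Omega. \<forall>n. capital P xi n \<ge> -1) \<and>
     (\<forall>xi\<in>Omega. xi \<notin> E \<longrightarrow> limsup (\<lambda>n. ereal (capital P xi n)) = \<infinity>))"

definition E5 :: "(nat \<Rightarrow> real) set" where
  "E5 = {xi \<in> Omega. \<exists>\<^sub>\<infinity>n. ssum xi n > sqrt (real n) - 1}"

definition E6 :: "(nat \<Rightarrow> real) set" where
  "E6 = {xi \<in> Omega. \<exists>\<^sub>\<infinity>n. ssum xi n < - sqrt (real n) + 1}"

end

theory Submission
  imports Defs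
begin

text \<open>Outside \<open>E5\<close> the walk eventually stays in the region \<open>s \<le> sqrt n - 1\<close>. There
  \<open>F n s = sqrt (root 8 n * (9/8 - s / sqrt n))\<close> is positive and superharmonic for the
  simple random walk, \<open>F (n+1) (s+1) + F (n+1) (s-1) \<le> 2 F n s\<close>, so staking the fraction
  \<open>(F (n+1) (s+1) - F (n+1) (s-1)) / (2 F n s)\<close> of the current capital keeps the capital
  positive and makes its ratio to \<open>F n s\<close> nondecreasing. As \<open>F n s \<ge> sqrt (root 8 n / 8)\<close>
  in the region, the capital tends to infinity. \<open>E6\<close> is \<open>E5\<close> for the reflected path.\<close>

definition wealth :: "(real list \<Rightarrow> real) \<Rightarrow> real list \<Rightarrow> real" where
  "wealth b h = (\<Prod>k<length h. 1 + b (take k h) * h ! k)"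

definition proportional_strategy :: "(real list \<Rightarrow> real) \<Rightarrow> strategy" where
  "proportional_strategy b h = wealth b h * b h"

lemma wealth_Nil [simp]: "wealth b [] = 1"
  by (simp add: wealth_def)

lemma wealth_snoc: "wealth b (h @ [x]) = wealth b h * (1 + b h * x)"
  unfolding wealth_def by (simp add: nth_append)

lemma capital_proportional_strategy:
  "capital (proportional_strategy b) xi n = wealth b (map xi [0..<n]) - 1"
  by (induction n) (simp_all add: capital_def proportional_strategy_def wealth_snoc algebra_simps)

lemma wealth_pos:
  assumes "\<And>h. \<bar>b h\<bar> < 1" and "set h \<subseteq> {-1, 1}"
  shows "0 < wealth b h"
proof -
  have "0 < 1 + b (take k h) * h ! k" if "k < length h" for k
    using assms(1)[of "take k h"] assms(2) nth_mem[OF that] by (auto simp: abs_less_iff)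
  then show ?thesis unfolding wealth_def by (intro prod_pos) auto
qed

lemma set_map_path_subset: "xi \<in> Omega \<Longrightarrow> set (map xi [0..<n]) \<subseteq> {-1, 1}"
  by (auto simp: Omega_def)

lemma sum_list_map_path: "sum_list (map xi [0..<n]) = ssum xi n"
  by (simp add: ssum_def sum_list_sum_nth atLeast0LessThan)

definition hedge_ratio :: "(nat \<Rightarrow> real \<Rightarrow> real) \<Rightarrow> nat \<Rightarrow> real \<Rightarrow> real" where
  "hedge_ratio F n s = (F (Suc n) (s + 1) - F (Suc n) (s - 1)) / (2 * F n s)"

locale superharmonic_potential =
  fixes R :: "nat \<Rightarrow> real \<Rightarrow> bool" and F :: "nat \<Rightarrow> real \<Rightarrow> real"
  assumes pos: "R n s \<Longrightarrow> 0 < F n s"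
    and pos_Suc: "R n s \<Longrightarrow> x \<in> {-1, 1} \<Longrightarrow> 0 < F (Suc n) (s + x)"
    and superharmonic: "R n s \<Longrightarrow> F (Suc n) (s + 1) + F (Suc n) (s - 1) \<le> 2 * F n s"
begin

definition bet :: "real list \<Rightarrow> real" where
  "bet h = (if R (length h) (sum_list h) then hedge_ratio F (length h) (sum_list h) else 0)"

lemma abs_bet_less_one: "\<bar>bet h\<bar> < 1"
proof (cases "R (length h) (sum_list h)")
  case True
  define n s where "n = length h" and "s = sum_list h"
  have "0 < F (Suc n) (s + 1)" and "0 < F (Suc n) (s - 1)"
    using pos_Suc[of n s 1] pos_Suc[of n s "-1"] True by (simp_all add: n_def s_def)
  then have "\<bar>F (Suc n) (s + 1) - F (Suc n) (s - 1)\<bar> < 2 * F n s"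
    using superharmonic[of n s] True by (simp add: n_def s_def)
  then show ?thesis
    using True by (simp add: bet_def hedge_ratio_def n_def s_def)
qed (simp add: bet_def)

lemma potential_le_hedged:
  assumes "R n s" and "x \<in> {-1, 1}"
  shows "F (Suc n) (s + x) \<le> (1 + hedge_ratio F n s * x) * F n s"
proof -
  have "(1 + hedge_ratio F n s * x) * F n s = F n s + (F (Suc n) (s + 1) - F (Suc n) (s - 1)) / 2 * x"
    using pos[OF assms(1)] by (simp add: hedge_ratio_def field_simps)
  then show ?thesis
    using superharmonic[OF assms(1)] assms(2) by (auto simp: field_simps)
qed

lemma wealth_potential_mono:
  assumes xi: "xi \<in> Omega" and region: "\<forall>m\<ge>N. R m (ssum xi m)" and "N \<le> n"
  shows "wealth bet (map xi [0..<N]) * F n (ssum xi n) \<le> wealth bet (map xi [0..<n]) * F N (ssum xi N)"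
  using \<open>N \<le> n\<close>
proof (induction n rule: dec_induct)
  case (step n)
  let ?W = "\<lambda>n. wealth bet (map xi [0..<n])"
  define f where "f = 1 + bet (map xi [0..<n]) * xi n"
  have x: "xi n \<in> {-1, 1}" using xi by (simp add: Omega_def)
  have f: "F (Suc n) (ssum xi (Suc n)) \<le> f * F n (ssum xi n)"
    using potential_le_hedged[OF _ x] region step.hyps
    by (simp add: f_def bet_def sum_list_map_path ssum_def)
  have "0 \<le> f" using abs_bet_less_one[of "map xi [0..<n]"] x by (auto simp: f_def abs_less_iff)
  have "0 \<le> ?W N" using wealth_pos[OF abs_bet_less_one set_map_path_subset[OF xi]] by (simp add: less_imp_le)
  have "?W N * F (Suc n) (ssum xi (Suc n)) \<le> f * (?W N * F n (ssum xi n))"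
    using mult_left_mono[OF f \<open>0 \<le> ?W N\<close>] by (simp add: mult_ac)
  also have "\<dots> \<le> f * (?W n * F N (ssum xi N))"
    using step.IH \<open>0 \<le> f\<close> by (rule mult_left_mono)
  also have "\<dots> = ?W (Suc n) * F N (ssum xi N)"
    by (simp add: f_def wealth_snoc)
  finally show ?case .
qed simp

lemma wealth_tendsto_at_top:
  assumes xi: "xi \<in> Omega" and region: "eventually (\<lambda>n. R n (ssum xi n)) sequentially"
    and lower: "\<And>n s. R n s \<Longrightarrow> g n \<le> F n s" and g: "filterlim g at_top sequentially"
  shows "filterlim (\<lambda>n. wealth bet (map xi [0..<n])) at_top sequentially"
proof -
  let ?W = "\<lambda>n. wealth bet (map xi [0..<n])"
  obtain N where N: "\<forall>m\<ge>N. R m (ssum xi m)"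
    using region by (auto simp: eventually_sequentially)
  define C where "C = ?W N / F N (ssum xi N)"
  have FN: "0 < F N (ssum xi N)" using pos N by simp
  have "0 < C" unfolding C_def using wealth_pos[OF abs_bet_less_one set_map_path_subset[OF xi]] FN by simp
  have "C * g n \<le> ?W n" if "N \<le> n" for n
  proof -
    have "C * g n \<le> C * F n (ssum xi n)" using lower N that \<open>0 < C\<close> by simp
    also have "\<dots> \<le> ?W n" using wealth_potential_mono[OF xi N that] FN by (simp add: C_def field_simps)
    finally show ?thesis .
  qed
  then have "eventually (\<lambda>n. C * g n \<le> ?W n) sequentially"
    by (auto simp: eventually_sequentially)
  moreover have "filterlim (\<lambda>n. C * g n) at_top sequentially"
    by (rule filterlim_tendsto_pos_mult_at_top[OF tendsto_const \<open>0 < C\<close> g])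
  ultimately show ?thesis by (rule filterlim_at_top_mono[rotated])
qed

lemma weakly_forces_if_eventually_in_region:
  assumes region: "\<And>xi. xi \<in> Omega \<Longrightarrow> xi \<notin> E \<Longrightarrow> eventually (\<lambda>n. R n (ssum xi n)) sequentially"
    and lower: "\<And>n s. R n s \<Longrightarrow> g n \<le> F n s" and g: "filterlim g at_top sequentially"
  shows "weakly_forces E"
  unfolding weakly_forces_def
proof (intro exI[of _ "proportional_strategy bet"] conjI ballI allI impI)
  fix xi n assume "xi \<in> Omega"
  then show "- 1 \<le> capital (proportional_strategy bet) xi n"
    using wealth_pos[OF abs_bet_less_one set_map_path_subset] by (simp add: capital_proportional_strategy less_imp_le)
next
  fix xi assume "xi \<in> Omega" and "xi \<notin> E"
  then have "filterlim (\<lambda>n. wealth bet (map xi [0..<n])) at_top sequentially"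
    using region lower g by (intro wealth_tendsto_at_top)
  then have "filterlim (\<lambda>n. -1 + wealth bet (map xi [0..<n])) at_top sequentially"
    by (rule filterlim_tendsto_add_at_top[OF tendsto_const])
  then have "((\<lambda>n. ereal (capital (proportional_strategy bet) xi n)) \<longlongrightarrow> \<infinity>) sequentially"
    by (simp add: capital_proportional_strategy tendsto_PInfty_eq_at_top)
  then show "limsup (\<lambda>n. ereal (capital (proportional_strategy bet) xi n)) = \<infinity>"
    by (simp add: lim_imp_Limsup)
qed

end

lemma root_8_add_one_le:
  fixes n :: real
  assumes "1 \<le> n"
  shows "root 8 (n + 1) \<le> root 8 n * (1 + 1 / (8 * n))"
proof -
  have "1 + 1 / n = 1 + real 8 * (1 / (8 * n))" by simp
  also have "\<dots> \<le> (1 + 1 / (8 * n)) ^ 8"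
    using assms by (intro Bernoulli_inequality) (simp add: order_trans[of _ 0])
  finally have "n + 1 \<le> n * (1 + 1 / (8 * n)) ^ 8"
    using assms mult_left_mono[of "1 + 1 / n" _ n] by (simp add: distrib_left)
  then have "root 8 (n + 1) \<le> root 8 (n * (1 + 1 / (8 * n)) ^ 8)"
    by (intro real_root_le_mono) auto
  also have "\<dots> = root 8 n * (1 + 1 / (8 * n))"
    using assms by (simp add: real_root_mult real_root_pos2)
  finally show ?thesis .
qed

lemma sqrt_add_sqrt_le:
  fixes A d :: real
  assumes "0 < d" and "d < A"
  shows "sqrt (A - d) + sqrt (A + d) \<le> sqrt (4 * A - d^2 / A)"
proof -
  have "(A - d^2 / (2 * A))^2 = A^2 - d^2 + (d^2 / (2 * A))^2"
    using assms by (simp add: power2_diff)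
  then have "A^2 - d^2 \<le> (A - d^2 / (2 * A))^2" by simp
  moreover have "0 \<le> A - d^2 / (2 * A)"
    using assms by (simp add: field_simps power2_eq_square mult_mono)
  ultimately have "sqrt (A^2 - d^2) \<le> A - d^2 / (2 * A)"
    by (intro real_le_lsqrt)
  moreover have "sqrt (A - d) * sqrt (A + d) = sqrt (A^2 - d^2)"
    by (simp add: real_sqrt_mult[symmetric] algebra_simps power2_eq_square)
  ultimately have "sqrt (A - d) * sqrt (A + d) \<le> A - d^2 / (2 * A)" by simp
  then have "(sqrt (A - d) + sqrt (A + d))^2 \<le> 4 * A - d^2 / A"
    using assms by (simp add: power2_sum field_simps)
  then show ?thesis by (simp add: real_le_rsqrt)
qed

lemma quadratic_bound:
  fixes A T :: real
  assumes "0 < A" and "2 \<le> T" and "T \<le> 4"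
  shows "4 * A * (A + (9/8 - A) * T) \<le> 27/4"
proof -
  \<comment> \<open>The left side is affine in \<open>T\<close>, so only \<open>T = 2\<close> and \<open>T = 4\<close> need checking.\<close>
  consider "(9/8 - A) * T \<le> (9/8 - A) * 4" | "(9/8 - A) * T \<le> (9/8 - A) * 2"
  proof (cases "0 \<le> 9/8 - A")
    case True
    then show ?thesis using that(1) mult_left_mono[OF assms(3) True] by blast
  next
    case False
    then have "9/8 - A \<le> 0" by simp
    from mult_left_mono_neg[OF assms(2) this] show ?thesis by (rule that(2))
  qed
  then show ?thesis
  proof cases
    case 1
    then have "4 * A * (A + (9/8 - A) * T) \<le> 4 * A * (A + (9/8 - A) * 4)"
      using assms(1) by (intro mult_left_mono) auto
    also have "\<dots> = 27/4 - 12 * (A - 3/4)^2"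
      by (simp add: algebra_simps power2_eq_square)
    also have "\<dots> \<le> 27/4" by simp
    finally show ?thesis .
  next
    case 2
    then have "4 * A * (A + (9/8 - A) * T) \<le> 4 * A * (A + (9/8 - A) * 2)"
      using assms(1) by (intro mult_left_mono) auto
    also have "\<dots> = 81/16 - 4 * (A - 9/8)^2"
      by (simp add: algebra_simps power2_eq_square)
    also have "\<dots> \<le> 27/4" using zero_le_power2[of "A - 9/8"] by linarith
    finally show ?thesis .
  qed
qed

lemma divide_sqrt_diff_eq:
  fixes n s :: real
  assumes "0 < n"
  shows "s / sqrt n - s / sqrt (n + 1) = s / sqrt (n + 1) * sqrt n / ((sqrt n + sqrt (n + 1)) * n)"
proof -
  define r r' where "r = sqrt n" and "r' = sqrt (n + 1)"
  have "0 < r" "0 < r'" using assms by (simp_all add: r_def r'_def)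
  have "(r' - r) * (r' + r) = 1"
    using assms by (simp add: r_def r'_def algebra_simps)
  then have diff: "r' - r = 1 / (r + r')"
    using \<open>0 < r\<close> \<open>0 < r'\<close> by (simp add: field_simps)
  have "s / r - s / r' = s * (r' - r) / (r * r')"
    using \<open>0 < r\<close> \<open>0 < r'\<close> by (simp add: field_simps)
  also have "\<dots> = s / (r * r' * (r + r'))"
    unfolding diff by simp
  also have "\<dots> = s / r' * r / ((r + r') * (r * r))"
    using \<open>0 < r\<close> \<open>0 < r'\<close> by (simp add: divide_simps)
  finally show ?thesis
    using assms by (simp add: r_def r'_def)
qed

lemma superharmonic_reduced:
  fixes n s A :: real
  assumes n: "5 \<le> n" and s: "s \<le> sqrt n - 1" and A: "A = 9/8 - s / sqrt (n + 1)"
  shows "(1 + 1 / (8 * n)) * (4 * A - 1 / ((n + 1) * A)) \<le> 4 * (9/8 - s / sqrt n)"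
proof -
  define u T where "u = s / sqrt (n + 1)" and "T = 8 * sqrt n / (sqrt n + sqrt (n + 1))"
  have "0 < sqrt n" and "sqrt n \<le> sqrt (n + 1)" using n by simp_all
  have "sqrt (n + 1) \<le> sqrt (9 * n)" using n by simp
  then have "sqrt (n + 1) \<le> 3 * sqrt n" by (simp add: real_sqrt_mult)
  moreover have "0 < sqrt n + sqrt (n + 1)"
    using \<open>0 < sqrt n\<close> \<open>sqrt n \<le> sqrt (n + 1)\<close> by linarith
  ultimately have T: "2 \<le> T" "T \<le> 4"
    using \<open>sqrt n \<le> sqrt (n + 1)\<close> by (simp_all add: T_def le_divide_eq divide_le_eq)
  have "s < sqrt (n + 1)" using s \<open>sqrt n \<le> sqrt (n + 1)\<close> by linarith
  then have "u < 1" using \<open>0 < sqrt n\<close> \<open>sqrt n \<le> sqrt (n + 1)\<close> by (simp add: u_def divide_less_eq)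
  then have "0 < A" using A u_def by linarith
  have shift: "9/8 - s / sqrt n = A - u * T / (8 * n)"
    using divide_sqrt_diff_eq[of n s] n by (simp add: A u_def T_def)
  have "4 * A * (A + u * T) \<le> 27/4"
    using quadratic_bound[OF \<open>0 < A\<close> T] by (simp add: A u_def)
  also have "\<dots> \<le> (8 * n + 1) / (n + 1)" using n by (simp add: field_simps)
  finally have "0 \<le> ((8 * n + 1) / (n + 1) - 4 * A * (A + u * T)) / (8 * n * A)"
    using n \<open>0 < A\<close> by simp
  also have "\<dots> = 4 * (A - u * T / (8 * n)) - (1 + 1 / (8 * n)) * (4 * A - 1 / ((n + 1) * A))"
    using n \<open>0 < A\<close> by (simp add: divide_simps) (simp add: algebra_simps)
  finally show ?thesis unfolding shift by simp
qed

definition potential :: "nat \<Rightarrow> real \<Rightarrow> real" where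
  "potential n s = sqrt (root 8 n * (9/8 - s / sqrt n))"

lemma potential_pos:
  assumes "0 < n" and "s < 9/8 * sqrt n"
  shows "0 < potential n s"
  using assms by (simp add: potential_def divide_less_eq)

lemma potential_ge:
  assumes "0 < n" and "s \<le> sqrt n - 1"
  shows "sqrt (root 8 n / 8) \<le> potential n s"
proof -
  have "s / sqrt n \<le> 1" using assms by (simp add: divide_le_eq)
  then have "1/8 \<le> 9/8 - s / sqrt n" by linarith
  then have "root 8 n * (1/8) \<le> root 8 n * (9/8 - s / sqrt n)"
    by (rule mult_left_mono) simp
  then show ?thesis unfolding potential_def by simp
qed

lemma potential_superharmonic:
  assumes n: "5 \<le> n" and s: "s \<le> sqrt n - 1"
  shows "potential (Suc n) (s + 1) + potential (Suc n) (s - 1) \<le> 2 * potential n s"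
proof -
  define r where "r = sqrt (Suc n)"
  define A d where "A = 9/8 - s / r" and "d = 1 / r"
  define Q where "Q = 4 * A - d^2 / A"
  have "0 < r" by (simp add: r_def)
  then have "0 < d" by (simp add: d_def)
  have "sqrt n \<le> r" by (simp add: r_def)
  with s have "s + 1 \<le> r" by linarith
  with \<open>0 < r\<close> have "d < A" by (simp add: A_def d_def field_simps)
  have "d^2 / A \<le> A" using \<open>0 < d\<close> \<open>d < A\<close> by (simp add: divide_le_eq power2_eq_square mult_mono)
  then have "0 \<le> Q" using \<open>0 < d\<close> \<open>d < A\<close> by (simp add: Q_def)
  have "potential (Suc n) (s + 1) + potential (Suc n) (s - 1)
      = sqrt (root 8 (Suc n)) * (sqrt (A - d) + sqrt (A + d))"
  proof -
    have up: "9/8 - (s + 1) / r = A - d" and down: "9/8 - (s - 1) / r = A + d"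
      by (simp_all add: A_def d_def add_divide_distrib diff_divide_distrib)
    show ?thesis
      unfolding potential_def r_def[symmetric] up down real_sqrt_mult by (rule distrib_left[symmetric])
  qed
  also have "\<dots> \<le> sqrt (root 8 (Suc n)) * sqrt Q"
    unfolding Q_def using sqrt_add_sqrt_le[OF \<open>0 < d\<close> \<open>d < A\<close>] by (simp add: mult_left_mono)
  also have "\<dots> \<le> sqrt (root 8 n * ((1 + 1 / (8 * n)) * Q))"
  proof -
    have "root 8 (Suc n) \<le> root 8 n * (1 + 1 / (8 * n))"
      using root_8_add_one_le[of n] n by (simp add: add.commute)
    then have "root 8 (Suc n) * Q \<le> root 8 n * ((1 + 1 / (8 * n)) * Q)"
      using \<open>0 \<le> Q\<close> by (metis mult.assoc mult_right_mono)
    then show ?thesis by (simp add: real_sqrt_mult[symmetric])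
  qed
  also have "\<dots> \<le> sqrt (root 8 n * (4 * (9/8 - s / sqrt n)))"
    using superharmonic_reduced[of n s A] n s \<open>0 < d\<close>
    by (simp add: Q_def A_def d_def r_def power_divide mult_left_mono add.commute)
  also have "\<dots> = sqrt 4 * potential n s"
    unfolding potential_def real_sqrt_mult[symmetric] by (simp only: mult.left_commute)
  also have "\<dots> = 2 * potential n s" by simp
  finally show ?thesis .
qed

lemma filterlim_sqrt_root_8_at_top: "filterlim (\<lambda>n. sqrt (root 8 (real n) / 8)) at_top sequentially"
proof -
  have "filterlim (\<lambda>x::real. sqrt (root 8 x / 8)) at_top at_top"
  proof (rule filterlim_at_top_at_top[where Q="\<lambda>x. True" and P="\<lambda>y. 0 < y" and g="\<lambda>y. (8 * y^2)^8"])
    fix y :: real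
    assume "0 < y"
    have "root 8 ((8 * y^2)^8) = 8 * y^2" by (rule real_root_pos2) auto
    then show "sqrt (root 8 ((8 * y^2)^8) / 8) = y" using \<open>0 < y\<close> by simp
  qed auto
  then show ?thesis using filterlim_real_sequentially by (rule filterlim_compose)
qed

lemma weakly_forces_E5: "weakly_forces E5"
proof -
  let ?R = "\<lambda>n s. (5 :: nat) \<le> n \<and> s \<le> sqrt (real n) - 1"
  interpret superharmonic_potential ?R potential
  proof
    fix n s and x :: real
    assume R: "?R n s"
    have "0 < sqrt n" and "sqrt n \<le> sqrt (Suc n)" using R by simp_all
    then have "s < 9/8 * sqrt n" using R by linarith
    then show "0 < potential n s" by (rule potential_pos[rotated]) (use R in simp)
    assume "x \<in> {-1, 1}"
    then have "s + x \<le> sqrt n" using R by auto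
    then have "s + x < 9/8 * sqrt (Suc n)"
      using \<open>0 < sqrt n\<close> \<open>sqrt n \<le> sqrt (Suc n)\<close> by linarith
    then show "0 < potential (Suc n) (s + x)" by (rule potential_pos[rotated]) simp
  qed (simp add: potential_superharmonic)
  show ?thesis
  proof (rule weakly_forces_if_eventually_in_region)
    fix xi assume "xi \<in> Omega" and "xi \<notin> E5"
    then have "eventually (\<lambda>n. ssum xi n \<le> sqrt n - 1) sequentially"
      by (simp add: E5_def not_frequently not_less cofinite_eq_sequentially)
    then show "eventually (\<lambda>n. ?R n (ssum xi n)) sequentially"
      using eventually_ge_at_top[of 5] by eventually_elim simp
  next
    fix n s
    assume "?R n s"
    then show "sqrt (root 8 (real n) / 8) \<le> potential n s" by (intro potential_ge) simp_all
  qed (rule filterlim_sqrt_root_8_at_top)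
qed

lemma weakly_forces_reflect:
  assumes "weakly_forces E" and "\<And>xi. xi \<in> Omega \<Longrightarrow> (\<lambda>k. - xi k) \<in> E \<Longrightarrow> xi \<in> E'"
  shows "weakly_forces E'"
proof -
  obtain P where bounded: "\<forall>xi\<in>Omega. \<forall>n. - 1 \<le> capital P xi n"
    and unbounded: "\<forall>xi\<in>Omega. xi \<notin> E \<longrightarrow> limsup (\<lambda>n. ereal (capital P xi n)) = \<infinity>"
    using assms(1) by (auto simp: weakly_forces_def)
  define P' where "P' h = - P (map uminus h)" for h
  have capital: "capital P' xi n = capital P (\<lambda>k. - xi k) n" for xi n
    unfolding capital_def P'_def by (simp add: o_def)
  have reflect: "(\<lambda>k. - xi k) \<in> Omega" if "xi \<in> Omega" for xi
    using that by (auto simp: Omega_def)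
  show ?thesis
    unfolding weakly_forces_def
  proof (intro exI[of _ P'] conjI ballI allI impI)
    fix xi n
    assume "xi \<in> Omega"
    then show "- 1 \<le> capital P' xi n" using bounded reflect unfolding capital by blast
  next
    fix xi
    assume "xi \<in> Omega" and "xi \<notin> E'"
    then have "(\<lambda>k. - xi k) \<notin> E" using assms(2) by blast
    then show "limsup (\<lambda>n. ereal (capital P' xi n)) = \<infinity>"
      using unbounded reflect[OF \<open>xi \<in> Omega\<close>] by (simp add: capital)
  qed
qed

theorem theorem4:
  shows "weakly_forces E5 \<and> weakly_forces E6"
proof
  show "weakly_forces E5" by (rule weakly_forces_E5)
  show "weakly_forces E6"
    using weakly_forces_E5
  proof (rule weakly_forces_reflect)
    fix xi assume "xi \<in> Omega" and "(\<lambda>k. - xi k) \<in> E5"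
    then show "xi \<in> E6"
      by (auto simp: E5_def E6_def ssum_def sum_negf elim: frequently_elim1)
  qed
qed

end
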